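(* Let $\mathbb{C}$ be a locally small category in which all morphisms are monomorphisms, and let $A\in\mathrm{Ob}(\mathbb{C})$. Then $t_{\mathbb{C}}(A)$ is finite if and only if both $t^\sim_{\mathbb{C}}(A)$ and $\mathrm{Aut}(A)$ are finite, and in that case $t_{\mathbb{C}}(A)=|\mathrm{Aut}(A)|\cdot t^\sim_{\mathbb{C}}(A)$.
   Context: For $k\ge2$, $t\ge1$ and objects $A,B,C$: $C\to(B)^A_{k,t}$ means that for every $\chi:\hom(A,C)\to\{0,\dots,k-1\}$ there is $w\in\hom(B,C)$ with $|\chi(w\cdot\hom(A,B))|\le t$ (where $w\cdot X=\{w\cdot x:x\in X\}$). $t_{\mathbb{C}}(A)$ is the least positive integer $n$ such that for all $k\ge2$ and all $B\in\mathrm{Ob}(\mathbb{C})$ there is $C\in\mathrm{Ob}(\mathbb{C})$ with $C\to(B)^A_{k,n}$; $t_{\mathbb{C}}(A)=\infty$ if no such $n$ exists. For $f,f'\in\hom(A,B)$ let $f\sim_A f'$ iff $f'=f\cdot\alpha$ for some $\alpha\in\mathrm{Aut}(A)$, and $\binom{B}{A}=\hom(A,B)/{\sim_A}$; for $w\in\hom(B,C)$, $w\cdot(f/{\sim_A})=(w\cdot f)/{\sim_A}$. $C\overset{\sim}{\to}(B)^A_{k,t}$ means that for every $\chi:\binom{C}{A}\to\{0,\dots,k-1\}$ there is $w\in\hom(B,C)$ with $|\chi(w\cdot\binom{B}{A})|\le t$. $t^\sim_{\mathbb{C}}(A)$ is the least positive integer $n$ such that for all $k\ge2$ and all $B$ there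 is $C$ with $C\overset{\sim}{\to}(B)^A_{k,n}$, and $\infty$ otherwise. *)

theory Defs
  imports "HOL-Library.Extended_Nat"
begin

text \<open>A (locally small) category given by a set of objects Ob, hom-sets hom A B,
  composition cmp (cmp g f = g after f) and identities idm.  Hom-sets are sets,
  so local smallness is automatic.\<close>

definition is_category ::
  "'o set \<Rightarrow> ('o \<Rightarrow> 'o \<Rightarrow> 'm set) \<Rightarrow> ('m \<Rightarrow> 'm \<Rightarrow> 'm) \<Rightarrow> ('o \<Rightarrow> 'm) \<Rightarrow> bool" where
  "is_category Ob hom cmp idm \<longleftrightarrow>
     (\<forall>A\<in>Ob. \<forall>B\<in>Ob. \<forall>C\<in>Ob. \<forall>f\<in>hom A B. \<forall>g\<in>hom B C. cmp g f \<in> hom A C)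
   \<and> (\<forall>A\<in>Ob. \<forall>B\<in>Ob. \<forall>C\<in>Ob. \<forall>D\<in>Ob. \<forall>f\<in>hom A B. \<forall>g\<in>hom B C. \<forall>h\<in>hom C D.
        cmp h (cmp g f) = cmp (cmp h g) f)
   \<and> (\<forall>A\<in>Ob. idm A \<in> hom A A)
   \<and> (\<forall>A\<in>Ob. \<forall>B\<in>Ob. \<forall>f\<in>hom A B. cmp (idm B) f = f \<and> cmp f (idm A) = f)
   \<and> (\<forall>A\<in>Ob. \<forall>B\<in>Ob. \<forall>A'\<in>Ob. \<forall>B'\<in>Ob. hom A B \<inter> hom A' B' \<noteq> {} \<longrightarrow> A = A' \<and> B = B')"

definition all_mono ::
  "'o set \<Rightarrow> ('o \<Rightarrow> 'o \<Rightarrow> 'm set) \<Rightarrow> ('m \<Rightarrow> 'm \<Rightarrow> 'm) \<Rightarrow> bool" where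
  "all_mono Ob hom cmp \<longleftrightarrow>
     (\<forall>A\<in>Ob. \<forall>B\<in>Ob. \<forall>C\<in>Ob. \<forall>f\<in>hom B C. \<forall>g\<in>hom A B. \<forall>h\<in>hom A B.
        cmp f g = cmp f h \<longrightarrow> g = h)"

definition Aut ::
  "('o \<Rightarrow> 'o \<Rightarrow> 'm set) \<Rightarrow> ('m \<Rightarrow> 'm \<Rightarrow> 'm) \<Rightarrow> ('o \<Rightarrow> 'm) \<Rightarrow> 'o \<Rightarrow> 'm set" where
  "Aut hom cmp idm A = {f \<in> hom A A. \<exists>g\<in>hom A A. cmp g f = idm A \<and> cmp f g = idm A}"

definition arrows ::
  "('o \<Rightarrow> 'o \<Rightarrow> 'm set) \<Rightarrow> ('m \<Rightarrow> 'm \<Rightarrow> 'm) \<Rightarrow> 'o \<Rightarrow> 'o \<Rightarrow> 'o \<Rightarrow> nat \<Rightarrow> nat \<Rightarrow> bool" where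
  "arrows hom cmp C B A k t \<longleftrightarrow>
     (\<forall>\<chi> :: 'm \<Rightarrow> nat. (\<forall>x\<in>hom A C. \<chi> x < k) \<longrightarrow>
        (\<exists>w\<in>hom B C. card (\<chi> ` ((\<lambda>f. cmp w f) ` hom A B)) \<le> t))"

definition small_ramsey_deg ::
  "'o set \<Rightarrow> ('o \<Rightarrow> 'o \<Rightarrow> 'm set) \<Rightarrow> ('m \<Rightarrow> 'm \<Rightarrow> 'm) \<Rightarrow> 'o \<Rightarrow> enat" where
  "small_ramsey_deg Ob hom cmp A =
     (let P = (\<lambda>n. 0 < n \<and> (\<forall>k\<ge>2. \<forall>B\<in>Ob. \<exists>C\<in>Ob. arrows hom cmp C B A k n))
      in if \<exists>n. P n then enat (LEAST n. P n) else \<infinity>)"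

definition simcls ::
  "('o \<Rightarrow> 'o \<Rightarrow> 'm set) \<Rightarrow> ('m \<Rightarrow> 'm \<Rightarrow> 'm) \<Rightarrow> ('o \<Rightarrow> 'm) \<Rightarrow> 'o \<Rightarrow> 'm \<Rightarrow> 'm set" where
  "simcls hom cmp idm A f = {f'. \<exists>\<alpha>\<in>Aut hom cmp idm A. f' = cmp f \<alpha>}"

definition binom ::
  "('o \<Rightarrow> 'o \<Rightarrow> 'm set) \<Rightarrow> ('m \<Rightarrow> 'm \<Rightarrow> 'm) \<Rightarrow> ('o \<Rightarrow> 'm) \<Rightarrow> 'o \<Rightarrow> 'o \<Rightarrow> 'm set set" where
  "binom hom cmp idm B A = simcls hom cmp idm A ` hom A B"

definition arrows_sim ::
  "('o \<Rightarrow> 'o \<Rightarrow> 'm set) \<Rightarrow> ('m \<Rightarrow> 'm \<Rightarrow> 'm) \<Rightarrow> ('o \<Rightarrow> 'm) \<Rightarrow> 'o \<Rightarrow> 'o \<Rightarrow> 'o \<Rightarrow> nat \<Rightarrow> nat \<Rightarrow> bool" where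
  "arrows_sim hom cmp idm C B A k t \<longleftrightarrow>
     (\<forall>\<chi> :: 'm set \<Rightarrow> nat. (\<forall>X\<in>binom hom cmp idm C A. \<chi> X < k) \<longrightarrow>
        (\<exists>w\<in>hom B C. card (\<chi> ` ((\<lambda>f. simcls hom cmp idm A (cmp w f)) ` hom A B)) \<le> t))"

definition small_ramsey_deg_sim ::
  "'o set \<Rightarrow> ('o \<Rightarrow> 'o \<Rightarrow> 'm set) \<Rightarrow> ('m \<Rightarrow> 'm \<Rightarrow> 'm) \<Rightarrow> ('o \<Rightarrow> 'm) \<Rightarrow> 'o \<Rightarrow> enat" where
  "small_ramsey_deg_sim Ob hom cmp idm A =
     (let P = (\<lambda>n. 0 < n \<and> (\<forall>k\<ge>2. \<forall>B\<in>Ob. \<exists>C\<in>Ob. arrows_sim hom cmp idm C B A k n))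
      in if \<exists>n. P n then enat (LEAST n. P n) else \<infinity>)"

end

theory Submission
  imports Defs "HOL-Library.FuncSet"
begin

text \<open>
  Since every morphism is monic, Aut(A) acts freely on hom(A,C) by precomposition. After
  choosing a representative in every class of \<open>\<sim>\<^sub>A\<close>, every \<open>u \<in> hom(A,C)\<close> is written
  uniquely as (representative of its class) composed with an automorphism, its coordinate.
  A k-colouring of arrows induces a \<open>k ^ |Aut(A)|\<close>-colouring of classes, the profile of
  colours along a class; a copy of B meeting n class colours meets at most \<open>|Aut(A)| * n\<close>
  arrow colours. Conversely, pairing a k-colouring of classes with the coordinate (restricted
  to a finite \<open>S \<subseteq> Aut(A)\<close>) gives a \<open>k |S|\<close>-colouring of arrows in which every class colour
  met by a copy of B occurs there with all |S| coordinates, so m arrow colours bound the class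
  colours by \<open>m div |S|\<close>. Taking \<open>|S| = m + 1\<close> shows that Aut(A) must be finite.
\<close>

lemma bounded_colouring_finite_colours:
  fixes \<chi> :: "'a \<Rightarrow> 'c"
  assumes bound: "\<forall>\<chi> :: 'a \<Rightarrow> nat. (\<forall>x\<in>D. \<chi> x < k) \<longrightarrow> (\<exists>w\<in>W. card (\<chi> ` S w) \<le> t)"
    and S: "\<And>w. w \<in> W \<Longrightarrow> S w \<subseteq> D"
    and \<chi>: "\<chi> ` D \<subseteq> K" and K: "finite K" "card K \<le> k"
  shows "\<exists>w\<in>W. card (\<chi> ` S w) \<le> t"
proof -
  obtain e where e: "bij_betw e K {0..<card K}"
    using ex_bij_betw_finite_nat[OF K(1)] by blast
  have "\<forall>x\<in>D. (e \<circ> \<chi>) x < k"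
    using \<chi> K(2) bij_betw_apply[OF e] by fastforce
  then obtain w where w: "w \<in> W" "card ((e \<circ> \<chi>) ` S w) \<le> t"
    using bound by blast
  have "inj_on e (\<chi> ` S w)"
    using e S[OF w(1)] \<chi> by (meson bij_betw_imp_inj_on image_mono inj_on_subset order_trans)
  then have "card ((e \<circ> \<chi>) ` S w) = card (\<chi> ` S w)"
    by (metis card_image image_comp)
  with w show ?thesis by auto
qed

definition has_ramsey_bound ::
  "'o set \<Rightarrow> ('o \<Rightarrow> 'o \<Rightarrow> 'm set) \<Rightarrow> ('m \<Rightarrow> 'm \<Rightarrow> 'm) \<Rightarrow> 'o \<Rightarrow> nat \<Rightarrow> bool" where
  "has_ramsey_bound Ob hom cmp A n \<longleftrightarrow> (\<forall>k\<ge>2. \<forall>B\<in>Ob. \<exists>C\<in>Ob. arrows hom cmp C B A k n)"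

definition has_ramsey_bound_sim ::
  "'o set \<Rightarrow> ('o \<Rightarrow> 'o \<Rightarrow> 'm set) \<Rightarrow> ('m \<Rightarrow> 'm \<Rightarrow> 'm) \<Rightarrow> ('o \<Rightarrow> 'm) \<Rightarrow> 'o \<Rightarrow> nat \<Rightarrow> bool" where
  "has_ramsey_bound_sim Ob hom cmp idm A n \<longleftrightarrow>
     (\<forall>k\<ge>2. \<forall>B\<in>Ob. \<exists>C\<in>Ob. arrows_sim hom cmp idm C B A k n)"

lemma small_ramsey_deg_eq_Least:
  assumes "\<not> has_ramsey_bound Ob hom cmp A 0"
  shows "small_ramsey_deg Ob hom cmp A =
    (if \<exists>n. has_ramsey_bound Ob hom cmp A n
     then enat (LEAST n. has_ramsey_bound Ob hom cmp A n) else \<infinity>)"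
proof -
  have "(\<lambda>n. 0 < n \<and> (\<forall>k\<ge>2. \<forall>B\<in>Ob. \<exists>C\<in>Ob. arrows hom cmp C B A k n))
      = has_ramsey_bound Ob hom cmp A"
  proof (rule ext)
    fix n
    show "(0 < n \<and> (\<forall>k\<ge>2. \<forall>B\<in>Ob. \<exists>C\<in>Ob. arrows hom cmp C B A k n))
        = has_ramsey_bound Ob hom cmp A n"
      using assms unfolding has_ramsey_bound_def by (cases n) auto
  qed
  then show ?thesis
    unfolding small_ramsey_deg_def Let_def by simp
qed

lemma small_ramsey_deg_sim_eq_Least:
  assumes "\<not> has_ramsey_bound_sim Ob hom cmp idm A 0"
  shows "small_ramsey_deg_sim Ob hom cmp idm A =
    (if \<exists>n. has_ramsey_bound_sim Ob hom cmp idm A n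
     then enat (LEAST n. has_ramsey_bound_sim Ob hom cmp idm A n) else \<infinity>)"
proof -
  have "(\<lambda>n. 0 < n \<and> (\<forall>k\<ge>2. \<forall>B\<in>Ob. \<exists>C\<in>Ob. arrows_sim hom cmp idm C B A k n))
      = has_ramsey_bound_sim Ob hom cmp idm A"
  proof (rule ext)
    fix n
    show "(0 < n \<and> (\<forall>k\<ge>2. \<forall>B\<in>Ob. \<exists>C\<in>Ob. arrows_sim hom cmp idm C B A k n))
        = has_ramsey_bound_sim Ob hom cmp idm A n"
      using assms unfolding has_ramsey_bound_sim_def by (cases n) auto
  qed
  then show ?thesis
    unfolding small_ramsey_deg_sim_def Let_def by simp
qed

definition class_rep :: "'a set \<Rightarrow> 'a" where
  "class_rep X = (SOME x. x \<in> X)"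

lemma class_rep_mem: "x \<in> X \<Longrightarrow> class_rep X \<in> X"
  unfolding class_rep_def by (rule someI)

definition aut_coord ::
  "('o \<Rightarrow> 'o \<Rightarrow> 'm set) \<Rightarrow> ('m \<Rightarrow> 'm \<Rightarrow> 'm) \<Rightarrow> ('o \<Rightarrow> 'm) \<Rightarrow> 'o \<Rightarrow> 'm \<Rightarrow> 'm" where
  "aut_coord hom cmp idm A u =
    (THE \<alpha>. \<alpha> \<in> Aut hom cmp idm A \<and> u = cmp (class_rep (simcls hom cmp idm A u)) \<alpha>)"

locale category =
  fixes Ob :: "'o set" and hom :: "'o \<Rightarrow> 'o \<Rightarrow> 'm set"
    and cmp :: "'m \<Rightarrow> 'm \<Rightarrow> 'm" and idm :: "'o \<Rightarrow> 'm"
  assumes is_category: "is_category Ob hom cmp idm"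
begin

lemma comp_closed:
  "X \<in> Ob \<Longrightarrow> Y \<in> Ob \<Longrightarrow> Z \<in> Ob \<Longrightarrow> f \<in> hom X Y \<Longrightarrow> g \<in> hom Y Z \<Longrightarrow> cmp g f \<in> hom X Z"
  using is_category unfolding is_category_def by blast

lemma comp_assoc:
  "X \<in> Ob \<Longrightarrow> Y \<in> Ob \<Longrightarrow> Z \<in> Ob \<Longrightarrow> W \<in> Ob \<Longrightarrow>
    f \<in> hom X Y \<Longrightarrow> g \<in> hom Y Z \<Longrightarrow> h \<in> hom Z W \<Longrightarrow> cmp h (cmp g f) = cmp (cmp h g) f"
  using is_category unfolding is_category_def by blast

lemma id_closed: "X \<in> Ob \<Longrightarrow> idm X \<in> hom X X"
  using is_category unfolding is_category_def by blast

lemma id_left: "X \<in> Ob \<Longrightarrow> Y \<in> Ob \<Longrightarrow> f \<in> hom X Y \<Longrightarrow> cmp (idm Y) f = f"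
  using is_category unfolding is_category_def by blast

lemma id_right: "X \<in> Ob \<Longrightarrow> Y \<in> Ob \<Longrightarrow> f \<in> hom X Y \<Longrightarrow> cmp f (idm X) = f"
  using is_category unfolding is_category_def by blast

abbreviation aut :: "'o \<Rightarrow> 'm set" where "aut \<equiv> Aut hom cmp idm"

abbreviation cls :: "'o \<Rightarrow> 'm \<Rightarrow> 'm set" where "cls \<equiv> simcls hom cmp idm"

lemma Aut_hom: "\<alpha> \<in> aut X \<Longrightarrow> \<alpha> \<in> hom X X"
  unfolding Aut_def by blast

lemma id_Aut: "X \<in> Ob \<Longrightarrow> idm X \<in> aut X"
  unfolding Aut_def using id_closed id_left by fastforce

lemma Aut_inverse: "\<alpha> \<in> aut X \<Longrightarrow> \<exists>\<beta>\<in>aut X. cmp \<alpha> \<beta> = idm X"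
  unfolding Aut_def by blast

lemma Aut_comp_closed:
  assumes X: "X \<in> Ob" and \<alpha>: "\<alpha> \<in> aut X" and \<beta>: "\<beta> \<in> aut X"
  shows "cmp \<alpha> \<beta> \<in> aut X"
proof -
  obtain \<alpha>' where \<alpha>': "\<alpha>' \<in> hom X X" "cmp \<alpha>' \<alpha> = idm X" "cmp \<alpha> \<alpha>' = idm X"
    using \<alpha> unfolding Aut_def by blast
  obtain \<beta>' where \<beta>': "\<beta>' \<in> hom X X" "cmp \<beta>' \<beta> = idm X" "cmp \<beta> \<beta>' = idm X"
    using \<beta> unfolding Aut_def by blast
  note homs = Aut_hom[OF \<alpha>] Aut_hom[OF \<beta>] \<alpha>'(1) \<beta>'(1)
  note assoc = comp_assoc[OF X X X X]
  have "cmp (cmp \<beta>' \<alpha>') (cmp \<alpha> \<beta>) = cmp \<beta>' (cmp (cmp \<alpha>' \<alpha>) \<beta>)"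
    using homs by (simp add: assoc comp_closed[OF X X X])
  moreover have "cmp (cmp \<alpha> \<beta>) (cmp \<beta>' \<alpha>') = cmp \<alpha> (cmp (cmp \<beta> \<beta>') \<alpha>')"
    using homs by (simp add: assoc comp_closed[OF X X X])
  ultimately have "cmp (cmp \<beta>' \<alpha>') (cmp \<alpha> \<beta>) = idm X" "cmp (cmp \<alpha> \<beta>) (cmp \<beta>' \<alpha>') = idm X"
    using \<alpha>' \<beta>' homs by (simp_all add: id_left[OF X X])
  then show ?thesis
    unfolding Aut_def using homs by (blast intro: comp_closed[OF X X X])
qed

lemma comp_image_subset:
  "A \<in> Ob \<Longrightarrow> B \<in> Ob \<Longrightarrow> C \<in> Ob \<Longrightarrow> w \<in> hom B C \<Longrightarrow> cmp w ` hom A B \<subseteq> hom A C"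
  using comp_closed by blast

lemma arrows_finite_colours:
  assumes "A \<in> Ob" "B \<in> Ob" "C \<in> Ob" and "arrows hom cmp C B A k t"
    and "\<chi> ` hom A C \<subseteq> K" "finite K" "card K \<le> k"
  shows "\<exists>w\<in>hom B C. card (\<chi> ` cmp w ` hom A B) \<le> t"
  using assms comp_image_subset
  by (intro bounded_colouring_finite_colours[where D = "hom A C" and K = K]) (auto simp: arrows_def)

context
  fixes A :: 'o
  assumes A: "A \<in> Ob"
begin

lemma cls_mem_binom: "u \<in> hom A C \<Longrightarrow> cls A u \<in> binom hom cmp idm C A"
  unfolding binom_def by blast

lemma arrows_sim_finite_colours:
  assumes "B \<in> Ob" "C \<in> Ob" and "arrows_sim hom cmp idm C B A k t"
    and "\<chi> ` binom hom cmp idm C A \<subseteq> K" "finite K" "card K \<le> k"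
  shows "\<exists>w\<in>hom B C. card (\<chi> ` (\<lambda>f. cls A (cmp w f)) ` hom A B) \<le> t"
  using assms comp_closed[OF A] cls_mem_binom
  by (intro bounded_colouring_finite_colours[where D = "binom hom cmp idm C A" and K = K])
    (auto simp: arrows_sim_def)

lemma mem_cls_self: "C \<in> Ob \<Longrightarrow> u \<in> hom A C \<Longrightarrow> u \<in> cls A u"
  unfolding simcls_def using id_Aut[OF A] id_right[OF A] by force

lemma cls_comp_Aut_subset:
  assumes C: "C \<in> Ob" and u: "u \<in> hom A C" and \<delta>: "\<delta> \<in> aut A"
  shows "cls A (cmp u \<delta>) \<subseteq> cls A u"
proof
  fix x assume "x \<in> cls A (cmp u \<delta>)"
  then obtain \<alpha> where \<alpha>: "\<alpha> \<in> aut A" "x = cmp (cmp u \<delta>) \<alpha>"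
    unfolding simcls_def by blast
  then have "x = cmp u (cmp \<delta> \<alpha>)"
    using comp_assoc[OF A A A C Aut_hom[OF \<alpha>(1)] Aut_hom[OF \<delta>] u] by simp
  then show "x \<in> cls A u"
    unfolding simcls_def using Aut_comp_closed[OF A \<delta> \<alpha>(1)] by blast
qed

lemma cls_comp_Aut:
  assumes C: "C \<in> Ob" and u: "u \<in> hom A C" and \<delta>: "\<delta> \<in> aut A"
  shows "cls A (cmp u \<delta>) = cls A u"
proof
  show "cls A (cmp u \<delta>) \<subseteq> cls A u" using cls_comp_Aut_subset[OF assms] .
  obtain \<delta>' where \<delta>': "\<delta>' \<in> aut A" "cmp \<delta> \<delta>' = idm A"
    using Aut_inverse[OF \<delta>] by blast
  have u\<delta>: "cmp u \<delta> \<in> hom A C"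
    using comp_closed[OF A A C Aut_hom[OF \<delta>] u] .
  have "cmp (cmp u \<delta>) \<delta>' = u"
    using comp_assoc[OF A A A C Aut_hom[OF \<delta>'(1)] Aut_hom[OF \<delta>] u] \<delta>'(2) id_right[OF A C u]
    by simp
  then show "cls A u \<subseteq> cls A (cmp u \<delta>)"
    using cls_comp_Aut_subset[OF C u\<delta> \<delta>'(1)] by simp
qed

lemma class_rep_cls:
  assumes "C \<in> Ob" "u \<in> hom A C"
  obtains \<gamma> where "\<gamma> \<in> aut A" "class_rep (cls A u) = cmp u \<gamma>"
  using class_rep_mem[OF mem_cls_self[OF assms]] unfolding simcls_def by blast

lemma class_rep_cls_hom:
  assumes "C \<in> Ob" "u \<in> hom A C"
  shows "class_rep (cls A u) \<in> hom A C"
proof -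
  obtain \<gamma> where "\<gamma> \<in> aut A" "class_rep (cls A u) = cmp u \<gamma>"
    using class_rep_cls[OF assms] .
  then show ?thesis using comp_closed[OF A A assms(1) Aut_hom assms(2)] by simp
qed

lemma cls_class_rep_cls:
  assumes "C \<in> Ob" "u \<in> hom A C"
  shows "cls A (class_rep (cls A u)) = cls A u"
proof -
  obtain \<gamma> where "\<gamma> \<in> aut A" "class_rep (cls A u) = cmp u \<gamma>"
    using class_rep_cls[OF assms] .
  then show ?thesis using cls_comp_Aut[OF assms] by simp
qed

lemma ex_Aut_eq_class_rep_comp:
  assumes C: "C \<in> Ob" and u: "u \<in> hom A C"
  shows "\<exists>\<gamma>\<in>aut A. u = cmp (class_rep (cls A u)) \<gamma>"
proof -
  obtain \<gamma> where \<gamma>: "\<gamma> \<in> aut A" "class_rep (cls A u) = cmp u \<gamma>"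
    using class_rep_cls[OF assms] .
  obtain \<gamma>' where \<gamma>': "\<gamma>' \<in> aut A" "cmp \<gamma> \<gamma>' = idm A"
    using Aut_inverse[OF \<gamma>(1)] by blast
  have "cmp (class_rep (cls A u)) \<gamma>' = u"
    using \<gamma> \<gamma>' comp_assoc[OF A A A C Aut_hom[OF \<gamma>'(1)] Aut_hom[OF \<gamma>(1)] u] id_right[OF A C u]
    by simp
  then show ?thesis using \<gamma>'(1) by metis
qed

lemma class_rep_comp_Aut_mem_image:
  assumes B: "B \<in> Ob" and C: "C \<in> Ob" and w: "w \<in> hom B C" and f: "f \<in> hom A B"
    and \<alpha>: "\<alpha> \<in> aut A"
  shows "cmp (class_rep (cls A (cmp w f))) \<alpha> \<in> cmp w ` hom A B"
proof -
  have wf: "cmp w f \<in> hom A C" using comp_closed[OF A B C f w] .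
  obtain \<gamma> where \<gamma>: "\<gamma> \<in> aut A" "class_rep (cls A (cmp w f)) = cmp (cmp w f) \<gamma>"
    using class_rep_cls[OF C wf] .
  note homs = Aut_hom[OF \<alpha>] Aut_hom[OF \<gamma>(1)]
  have "cmp (class_rep (cls A (cmp w f))) \<alpha> = cmp w (cmp f (cmp \<gamma> \<alpha>))"
    using \<gamma>(2) homs f w
    by (simp add: comp_assoc[OF A A A C] comp_assoc[OF A A B C] comp_assoc[OF A A A B]
        comp_closed[OF A A A] comp_closed[OF A A B] wf)
  moreover have "cmp f (cmp \<gamma> \<alpha>) \<in> hom A B"
    using homs f by (blast intro: comp_closed[OF A A B] comp_closed[OF A A A])
  ultimately show ?thesis by blast
qed

end

end

locale mono_category = category Ob hom cmp idm
  for Ob :: "'o set" and hom :: "'o \<Rightarrow> 'o \<Rightarrow> 'm set"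
    and cmp :: "'m \<Rightarrow> 'm \<Rightarrow> 'm" and idm :: "'o \<Rightarrow> 'm" +
  assumes all_mono: "all_mono Ob hom cmp"
begin

lemma mono_cancel:
  "X \<in> Ob \<Longrightarrow> Y \<in> Ob \<Longrightarrow> Z \<in> Ob \<Longrightarrow> f \<in> hom Y Z \<Longrightarrow> g \<in> hom X Y \<Longrightarrow> h \<in> hom X Y \<Longrightarrow>
    cmp f g = cmp f h \<Longrightarrow> g = h"
  using all_mono unfolding all_mono_def by blast

abbreviation coord :: "'o \<Rightarrow> 'm \<Rightarrow> 'm" where "coord \<equiv> aut_coord hom cmp idm"

context
  fixes A :: 'o
  assumes A: "A \<in> Ob"
begin

lemma aut_coord_decomp:
  assumes C: "C \<in> Ob" and u: "u \<in> hom A C"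
  shows "coord A u \<in> aut A" "u = cmp (class_rep (cls A u)) (coord A u)"
proof -
  have "\<exists>!\<alpha>. \<alpha> \<in> aut A \<and> u = cmp (class_rep (cls A u)) \<alpha>"
    using ex_Aut_eq_class_rep_comp[OF A C u]
      mono_cancel[OF A A C class_rep_cls_hom[OF A C u] Aut_hom Aut_hom] by metis
  then have "coord A u \<in> aut A \<and> u = cmp (class_rep (cls A u)) (coord A u)"
    unfolding aut_coord_def by (rule theI')
  then show "coord A u \<in> aut A" "u = cmp (class_rep (cls A u)) (coord A u)"
    by blast+
qed

lemma aut_coord_eq:
  assumes "C \<in> Ob" "u \<in> hom A C" "\<alpha> \<in> aut A" "u = cmp (class_rep (cls A u)) \<alpha>"
  shows "coord A u = \<alpha>"
proof -
  have "cmp (class_rep (cls A u)) (coord A u) = cmp (class_rep (cls A u)) \<alpha>"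
    using aut_coord_decomp(2)[OF assms(1,2)] assms(4) by simp
  then show ?thesis
    using mono_cancel[OF A A assms(1) class_rep_cls_hom[OF A assms(1,2)]]
      Aut_hom[OF aut_coord_decomp(1)[OF assms(1,2)]] Aut_hom[OF assms(3)] by blast
qed

lemma class_rep_comp_Aut:
  assumes C: "C \<in> Ob" and u: "u \<in> hom A C" and \<alpha>: "\<alpha> \<in> aut A"
  defines "v \<equiv> cmp (class_rep (cls A u)) \<alpha>"
  shows "cls A v = cls A u" "coord A v = \<alpha>"
proof -
  have r: "class_rep (cls A u) \<in> hom A C" using class_rep_cls_hom[OF A C u] .
  show cls_v: "cls A v = cls A u"
    unfolding v_def using cls_comp_Aut[OF A C r \<alpha>] cls_class_rep_cls[OF A C u] by simp
  have "v \<in> hom A C" unfolding v_def using comp_closed[OF A A C Aut_hom[OF \<alpha>] r] .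
  then show "coord A v = \<alpha>"
    using aut_coord_eq[OF C _ \<alpha>] cls_v unfolding v_def by simp
qed

lemma arrows_sim_imp_arrows:
  assumes B: "B \<in> Ob" and C: "C \<in> Ob" and fin: "finite (aut A)"
    and arr: "arrows_sim hom cmp idm C B A (k ^ card (aut A)) n"
  shows "arrows hom cmp C B A k (card (aut A) * n)"
  unfolding arrows_def
proof (intro allI impI)
  fix \<chi> :: "'m \<Rightarrow> nat"
  assume \<chi>: "\<forall>x\<in>hom A C. \<chi> x < k"
  define profile where "profile X = (\<lambda>\<alpha>\<in>aut A. \<chi> (cmp (class_rep X) \<alpha>))" for X
  have profiles: "profile ` binom hom cmp idm C A \<subseteq> aut A \<rightarrow>\<^sub>E {..<k}"
    using \<chi> class_rep_cls_hom[OF A C] comp_closed[OF A A C Aut_hom]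
    unfolding profile_def binom_def by fastforce
  have finite_profiles: "finite (aut A \<rightarrow>\<^sub>E {..<k})"
    using fin by (simp add: finite_PiE)
  have "card (aut A \<rightarrow>\<^sub>E {..<k}) = k ^ card (aut A)"
    using fin by (simp add: card_PiE)
  then obtain w where w: "w \<in> hom B C"
    and few: "card (profile ` (\<lambda>f. cls A (cmp w f)) ` hom A B) \<le> n"
    using arrows_sim_finite_colours[OF A B C arr profiles finite_profiles] by auto
  let ?P = "profile ` (\<lambda>f. cls A (cmp w f)) ` hom A B"
  have "\<chi> ` cmp w ` hom A B \<subseteq> (\<lambda>(p, \<alpha>). p \<alpha>) ` (?P \<times> aut A)"
  proof
    fix y assume "y \<in> \<chi> ` cmp w ` hom A B"
    then obtain f where f: "f \<in> hom A B" and y: "y = \<chi> (cmp w f)" by blast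
    have wf: "cmp w f \<in> hom A C" using comp_closed[OF A B C f w] .
    have mem: "(profile (cls A (cmp w f)), coord A (cmp w f)) \<in> ?P \<times> aut A"
      using f aut_coord_decomp(1)[OF C wf] by blast
    have "y = (\<lambda>(p, \<alpha>). p \<alpha>) (profile (cls A (cmp w f)), coord A (cmp w f))"
      using y aut_coord_decomp[OF C wf] unfolding profile_def by simp
    then show "y \<in> (\<lambda>(p, \<alpha>). p \<alpha>) ` (?P \<times> aut A)"
      by (rule rev_image_eqI[OF mem])
  qed
  moreover have "finite (?P \<times> aut A)"
  proof -
    have "?P \<subseteq> profile ` binom hom cmp idm C A"
      using cls_mem_binom[OF A] comp_closed[OF A B C _ w] by blast
    then show ?thesis
      using finite_subset[OF _ finite_profiles] profiles fin by auto
  qed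
  ultimately have "card (\<chi> ` cmp w ` hom A B) \<le> card (?P \<times> aut A)"
    by (meson card_image_le card_mono finite_imageI order_trans)
  also have "\<dots> \<le> card (aut A) * n"
    using few by (simp add: card_cartesian_product)
  finally show "\<exists>w\<in>hom B C. card (\<chi> ` cmp w ` hom A B) \<le> card (aut A) * n"
    using w by blast
qed

lemma arrows_imp_arrows_sim:
  assumes B: "B \<in> Ob" and C: "C \<in> Ob"
    and S: "S \<subseteq> aut A" "finite S" "S \<noteq> {}"
    and arr: "arrows hom cmp C B A (k * card S) m"
  shows "arrows_sim hom cmp idm C B A k (m div card S)"
  unfolding arrows_sim_def
proof (intro allI impI)
  fix \<chi> :: "'m set \<Rightarrow> nat"
  assume \<chi>: "\<forall>X\<in>binom hom cmp idm C A. \<chi> X < k"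
  obtain \<alpha>\<^sub>0 where \<alpha>\<^sub>0: "\<alpha>\<^sub>0 \<in> S" using S(3) by blast
  \<comment> \<open>Coordinates outside S are sent into S, so that only k * |S| colours are used.\<close>
  define coord\<^sub>S where "coord\<^sub>S u = (if coord A u \<in> S then coord A u else \<alpha>\<^sub>0)" for u
  define \<chi>' where "\<chi>' u = (\<chi> (cls A u), coord\<^sub>S u)" for u
  have colours: "\<chi>' ` hom A C \<subseteq> {..<k} \<times> S"
    using \<chi> cls_mem_binom[OF A] \<alpha>\<^sub>0 unfolding \<chi>'_def coord\<^sub>S_def by auto
  moreover have "card ({..<k} \<times> S) = k * card S" by (simp add: card_cartesian_product)
  ultimately obtain w where w: "w \<in> hom B C" and few: "card (\<chi>' ` cmp w ` hom A B) \<le> m"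
    using arrows_finite_colours[OF A B C arr] S(2) by (metis finite_SigmaI finite_lessThan order_refl)
  let ?V = "\<chi> ` (\<lambda>f. cls A (cmp w f)) ` hom A B"
  have "?V \<times> S \<subseteq> \<chi>' ` cmp w ` hom A B"
  proof clarify
    fix f \<alpha> assume f: "f \<in> hom A B" and \<alpha>: "\<alpha> \<in> S"
    have wf: "cmp w f \<in> hom A C" using comp_closed[OF A B C f w] .
    define v where "v = cmp (class_rep (cls A (cmp w f))) \<alpha>"
    have "\<chi>' v = (\<chi> (cls A (cmp w f)), \<alpha>)"
      using class_rep_comp_Aut[OF C wf] \<alpha> S(1)
      unfolding \<chi>'_def coord\<^sub>S_def v_def by auto
    moreover have "v \<in> cmp w ` hom A B"
      using class_rep_comp_Aut_mem_image[OF A B C w f] \<alpha> S(1) unfolding v_def by blast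
    ultimately show "(\<chi> (cls A (cmp w f)), \<alpha>) \<in> \<chi>' ` cmp w ` hom A B" by force
  qed
  moreover have "finite (\<chi>' ` cmp w ` hom A B)"
  proof (rule finite_subset)
    show "\<chi>' ` cmp w ` hom A B \<subseteq> {..<k} \<times> S"
      using colours comp_image_subset[OF A B C w] by blast
  qed (simp add: S(2))
  ultimately have "card (?V \<times> S) \<le> m"
    using few card_mono le_trans by blast
  then have "card ?V * card S \<le> m"
    by (simp add: card_cartesian_product)
  then have "card ?V \<le> m div card S"
    using S(2,3) by (simp add: less_eq_div_iff_mult_less_eq card_gt_0_iff)
  with w show "\<exists>w\<in>hom B C. card (\<chi> ` (\<lambda>f. cls A (cmp w f)) ` hom A B) \<le> m div card S"
    by blast
qed

lemma has_ramsey_bound_imp_sim: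
  assumes bound: "has_ramsey_bound Ob hom cmp A m" and S: "S \<subseteq> aut A" "finite S" "S \<noteq> {}"
  shows "has_ramsey_bound_sim Ob hom cmp idm A (m div card S)"
  unfolding has_ramsey_bound_sim_def
proof (intro allI impI ballI)
  fix k :: nat and B assume k: "2 \<le> k" and B: "B \<in> Ob"
  have "1 \<le> card S" using S(2,3) by (simp add: Suc_le_eq card_gt_0_iff)
  then have "k \<le> k * card S" by simp
  then obtain C where "C \<in> Ob" "arrows hom cmp C B A (k * card S) m"
    using bound k B unfolding has_ramsey_bound_def by (meson order_trans)
  then show "\<exists>C\<in>Ob. arrows_sim hom cmp idm C B A k (m div card S)"
    using arrows_imp_arrows_sim[OF B _ S] by blast
qed

lemma has_ramsey_bound_sim_imp:
  assumes fin: "finite (aut A)" and bound: "has_ramsey_bound_sim Ob hom cmp idm A n"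
  shows "has_ramsey_bound Ob hom cmp A (card (aut A) * n)"
  unfolding has_ramsey_bound_def
proof (intro allI impI ballI)
  fix k :: nat and B assume k: "2 \<le> k" and B: "B \<in> Ob"
  have "card (aut A) > 0" using fin id_Aut[OF A] card_gt_0_iff by blast
  then have "k \<le> k ^ card (aut A)" using k by (simp add: self_le_power)
  then obtain C where "C \<in> Ob" "arrows_sim hom cmp idm C B A (k ^ card (aut A)) n"
    using bound k B unfolding has_ramsey_bound_sim_def by (meson order_trans)
  then show "\<exists>C\<in>Ob. arrows hom cmp C B A k (card (aut A) * n)"
    using arrows_sim_imp_arrows[OF B _ fin] by blast
qed

lemma not_has_ramsey_bound_sim_0: "\<not> has_ramsey_bound_sim Ob hom cmp idm A 0"
proof
  assume "has_ramsey_bound_sim Ob hom cmp idm A 0"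
  then obtain C where "arrows_sim hom cmp idm C A A 2 0"
    using A unfolding has_ramsey_bound_sim_def by blast
  then have "(\<forall>X\<in>binom hom cmp idm C A. (\<lambda>_. 0::nat) X < 2) \<longrightarrow>
      (\<exists>w\<in>hom A C. card ((\<lambda>_. 0::nat) ` (\<lambda>f. cls A (cmp w f)) ` hom A A) \<le> 0)"
    unfolding arrows_sim_def by (rule spec)
  then obtain w where "card ((\<lambda>_. 0::nat) ` (\<lambda>f. cls A (cmp w f)) ` hom A A) = 0"
    by auto
  moreover have "hom A A \<noteq> {}" using id_closed[OF A] by blast
  ultimately show False by (simp add: image_constant_conv)
qed

lemma not_has_ramsey_bound_0: "\<not> has_ramsey_bound Ob hom cmp A 0"
proof
  assume "has_ramsey_bound Ob hom cmp A 0"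
  then have "has_ramsey_bound_sim Ob hom cmp idm A (0 div card {idm A})"
    using has_ramsey_bound_imp_sim id_Aut[OF A] by blast
  then show False using not_has_ramsey_bound_sim_0 by simp
qed

lemma has_ramsey_bound_imp_finite_Aut:
  assumes "has_ramsey_bound Ob hom cmp A m"
  shows "finite (aut A)"
proof (rule ccontr)
  assume "infinite (aut A)"
  then obtain S where S: "S \<subseteq> aut A" "finite S" "card S = Suc m"
    using infinite_arbitrarily_large by blast
  then have "S \<noteq> {}" by auto
  then have "has_ramsey_bound_sim Ob hom cmp idm A (m div Suc m)"
    using has_ramsey_bound_imp_sim[OF assms S(1,2)] S(3) by simp
  then show False using not_has_ramsey_bound_sim_0 by simp
qed

lemma Least_has_ramsey_bound:
  assumes bound: "has_ramsey_bound Ob hom cmp A m"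
  shows "(LEAST m. has_ramsey_bound Ob hom cmp A m)
    = card (aut A) * (LEAST n. has_ramsey_bound_sim Ob hom cmp idm A n)"
    (is "?l = ?a * ?n")
proof (rule antisym)
  have fin: "finite (aut A)" using has_ramsey_bound_imp_finite_Aut[OF bound] .
  have "has_ramsey_bound_sim Ob hom cmp idm A m"
    using has_ramsey_bound_imp_sim[OF bound, of "{idm A}"] id_Aut[OF A] by simp
  then have "has_ramsey_bound_sim Ob hom cmp idm A ?n" by (rule LeastI)
  then have "has_ramsey_bound Ob hom cmp A (?a * ?n)" by (rule has_ramsey_bound_sim_imp[OF fin])
  then show "?l \<le> ?a * ?n" by (rule Least_le)
  have "has_ramsey_bound Ob hom cmp A ?l" using bound by (rule LeastI)
  then have "has_ramsey_bound_sim Ob hom cmp idm A (?l div ?a)"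
    using has_ramsey_bound_imp_sim[of ?l "aut A"] fin id_Aut[OF A] by blast
  then have "?n \<le> ?l div ?a" by (rule Least_le)
  then show "?a * ?n \<le> ?l"
    using times_div_less_eq_dividend[of ?a ?l] by (meson mult_le_mono2 order_trans)
qed

end

end
theorem proposition3p1:
  fixes Ob :: "'o set" and hom :: "'o \<Rightarrow> 'o \<Rightarrow> 'm set"
    and cmp :: "'m \<Rightarrow> 'm \<Rightarrow> 'm" and idm :: "'o \<Rightarrow> 'm" and A :: 'o
  assumes "is_category Ob hom cmp idm"
    and "all_mono Ob hom cmp"
    and "A \<in> Ob"
  shows "(small_ramsey_deg Ob hom cmp A \<noteq> \<infinity> \<longleftrightarrow>
            small_ramsey_deg_sim Ob hom cmp idm A \<noteq> \<infinity> \<and> finite (Aut hom cmp idm A))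
       \<and> (small_ramsey_deg Ob hom cmp A \<noteq> \<infinity> \<longrightarrow>
            small_ramsey_deg Ob hom cmp A
              = enat (card (Aut hom cmp idm A)) * small_ramsey_deg_sim Ob hom cmp idm A)"
proof -
  interpret mono_category Ob hom cmp idm
    using assms(1,2) by unfold_locales
  note A = \<open>A \<in> Ob\<close>
  have bounded_iff: "(\<exists>m. has_ramsey_bound Ob hom cmp A m) \<longleftrightarrow>
      (\<exists>n. has_ramsey_bound_sim Ob hom cmp idm A n) \<and> finite (aut A)"
  proof
    assume "\<exists>m. has_ramsey_bound Ob hom cmp A m"
    then obtain m where m: "has_ramsey_bound Ob hom cmp A m" ..
    show "(\<exists>n. has_ramsey_bound_sim Ob hom cmp idm A n) \<and> finite (aut A)"
      using has_ramsey_bound_imp_sim[OF A m, of "{idm A}"] id_Aut[OF A]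
        has_ramsey_bound_imp_finite_Aut[OF A m] by auto
  qed (use has_ramsey_bound_sim_imp[OF A] in blast)
  show ?thesis
    unfolding small_ramsey_deg_eq_Least[OF not_has_ramsey_bound_0[OF A]]
      small_ramsey_deg_sim_eq_Least[OF not_has_ramsey_bound_sim_0[OF A]]
    using bounded_iff Least_has_ramsey_bound[OF A] by auto
qed

end
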